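(* Let $t,r$ be positive integers and let $b$ be a positive integer having property $\mathcal{P}$ with respect to $2^r t$. Then $x^{2^r t}+b^{2^r}$ is reducible over $\mathbb{Z}$ if and only if $t$ is even, $r=1$, and $b=2d^2$ for some positive integer $d$.
   Context: For a positive integer $N$, a positive integer $b$ has property $\mathcal{P}$ with respect to $N$ if either $b$ is a prime number, or $b=(p_1^{b_1}p_2^{b_2}\cdots p_k^{b_k})^d$ where $k\ge 2$, $p_1,\dots,p_k$ are distinct primes, $b_1,\dots,b_k\ge 1$, $\gcd(b_1,\ldots,b_k)=1$, and $d$ is a positive integer with $\gcd(d,N)=1$. A monic polynomial in $\mathbb{Z}[x]$ of degree $\ge 1$ is reducible over $\mathbb{Z}$ if it is a product of two polynomials in $\mathbb{Z}[x]$ of degree at least $1$. *)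

theory Defs
  imports "HOL-Computational_Algebra.Computational_Algebra"
begin

definition property_P :: "nat \<Rightarrow> nat \<Rightarrow> bool" where
  "property_P N b \<longleftrightarrow> prime b \<or>
     (\<exists>m d. m > 0 \<and> d > 0 \<and> b = m ^ d \<and> card (prime_factors m) \<ge> 2 \<and>
        Gcd ((\<lambda>p. multiplicity p m) ` prime_factors m) = 1 \<and> coprime d N)"

definition reducible_Z :: "int poly \<Rightarrow> bool" where
  "reducible_Z f \<longleftrightarrow> (\<exists>g h. f = g * h \<and> degree g \<ge> 1 \<and> degree h \<ge> 1)"

end

theory Submission
  imports Defs "HOL-Computational_Algebra.Field_as_Ring"
begin

text \<open>
  Write \<open>t = 2^s u\<close> with \<open>u\<close> odd, and \<open>b = m^d\<close> with \<open>m\<close> not a perfect power and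
  \<open>d\<close> coprime to \<open>2^r t\<close>. A monic rational factor \<open>g\<close> of degree \<open>k\<close> of \<open>x^u + b^(2^r)\<close>
  has \<open>|g(0)|^u = b^(2^r k)\<close>, so \<open>g(0)\<close> is an integer and \<open>u\<close> divides \<open>2^r d k\<close>, hence
  \<open>k\<close>: thus \<open>x^u + b^(2^r)\<close> is irreducible. Then \<open>x\<close> is replaced by \<open>x^2\<close>, \<open>r + s\<close>
  times. By Capelli's lemma, if \<open>F\<close> is irreducible but \<open>F(x^2)\<close> is not, then
  \<open>\<plusminus>F = E^2 - x Q^2\<close>. For \<open>F = x^n + C^2\<close> this is impossible when \<open>n\<close> is odd (look
  at the constant term) and forces \<open>C = 2 a^2\<close> when \<open>n\<close> is even. Since
  \<open>C = b^(2^(r-1))\<close> is a square for \<open>r \<ge> 2\<close>, only \<open>r = 1\<close>, \<open>t\<close> even and \<open>b = 2 d^2\<close>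
  remain, where \<open>x^(4k) + 4 d^4 = (x^(2k) + 2 d x^k + 2 d^2) (x^(2k) - 2 d x^k + 2 d^2)\<close>.
\<close>

section \<open>Newton's identities\<close>

definition poly_of_roots :: "'a::comm_ring_1 list \<Rightarrow> 'a poly" where
  "poly_of_roots as = (\<Prod>a\<leftarrow>as. [:-a, 1:])"

definition power_sum :: "'a::comm_semiring_1 list \<Rightarrow> nat \<Rightarrow> 'a" where
  "power_sum as k = (\<Sum>a\<leftarrow>as. a ^ k)"

lemma poly_of_roots_Nil [simp]: "poly_of_roots [] = 1"
  by (simp add: poly_of_roots_def)

lemma poly_of_roots_Cons [simp]: "poly_of_roots (a # as) = [:-a, 1:] * poly_of_roots as"
  by (simp add: poly_of_roots_def)

lemma power_sum_Nil [simp]: "power_sum [] k = 0"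
  by (simp add: power_sum_def)

lemma power_sum_Cons [simp]: "power_sum (a # as) k = a ^ k + power_sum as k"
  by (simp add: power_sum_def)

lemma power_sum_0: "power_sum as 0 = of_nat (length as)"
  by (induct as) auto

lemma power_sum_map_power: "power_sum (map (\<lambda>a. a ^ h) as) k = power_sum as (h * k)"
  by (induct as) (auto simp: power_mult)

lemma poly_poly_of_roots: "poly (poly_of_roots as) x = (\<Prod>a\<leftarrow>as. x - a)"
  by (induct as) (auto simp: algebra_simps)

lemma poly_poly_of_roots_root: "a \<in> set as \<Longrightarrow> poly (poly_of_roots as) a = 0"
  by (induct as) auto

lemma
  fixes as :: "'a::idom list"
  shows degree_poly_of_roots [simp]: "degree (poly_of_roots as) = length as"
    and lead_coeff_poly_of_roots [simp]: "coeff (poly_of_roots as) (length as) = 1"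
proof -
  have "poly_of_roots as \<noteq> 0 \<and> degree (poly_of_roots as) = length as \<and>
        lead_coeff (poly_of_roots as) = 1"
  proof (induct as)
    case (Cons a as)
    have "lead_coeff (poly_of_roots (a # as)) =
          lead_coeff [:-a, 1:] * lead_coeff (poly_of_roots as)"
      by (simp only: poly_of_roots_Cons lead_coeff_mult)
    with Cons show ?case
      by (auto simp: degree_mult_eq simp del: mult_pCons_left)
  qed simp
  then show "degree (poly_of_roots as) = length as" "coeff (poly_of_roots as) (length as) = 1"
    by auto
qed

lemma coeff_synthetic_div:
  fixes p :: "'a::comm_ring_1 poly"
  assumes "degree p \<le> N"
  shows "coeff (synthetic_div p c) l = (\<Sum>i=Suc l..N. coeff p i * c ^ (i - Suc l))"
  using assms
proof (induct p arbitrary: l N)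
  case (pCons a p)
  have dp: "degree p \<le> N - 1"
    using pCons by (cases "p = 0") auto
  show ?case
  proof (cases l)
    case 0
    have "poly p c = (\<Sum>i\<le>N - 1. coeff p i * c ^ i)"
      unfolding poly_altdef using dp by (intro sum.mono_neutral_left) (auto simp: coeff_eq_0)
    also have "\<dots> = (\<Sum>i=Suc 0..N. coeff (pCons a p) i * c ^ (i - Suc 0))"
      using pCons(3) by (cases N; cases "p = 0")
        (auto simp: atMost_atLeast0 sum.shift_bounds_cl_Suc_ivl simp del: sum.cl_ivl_Suc)
    finally show ?thesis
      using 0 by simp
  next
    case (Suc l')
    then have "coeff (synthetic_div (pCons a p) c) l =
               (\<Sum>i=Suc l'..N - 1. coeff p i * c ^ (i - Suc l'))"
      using pCons(2)[OF dp] by simp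
    also have "\<dots> = (\<Sum>i=Suc l..N. coeff (pCons a p) i * c ^ (i - Suc l))"
      using Suc by (cases N) (auto simp: sum.shift_bounds_cl_Suc_ivl simp del: sum.cl_ivl_Suc)
    finally show ?thesis .
  qed
qed simp

lemma synthetic_div_linear_mult: "synthetic_div ([:-a, 1:] * q) a = (q :: 'a::idom poly)"
proof -
  have "[:-a, 1:] * q = [:-a, 1:] * synthetic_div ([:-a, 1:] * q) a"
    using synthetic_div_correct'[of a "[:-a, 1:] * q"] by simp
  then show ?thesis
    by (metis mult_left_cancel pCons_eq_0_iff zero_neq_one)
qed

lemma pderiv_poly_of_roots:
  fixes as :: "'a::idom list"
  shows "pderiv (poly_of_roots as) = (\<Sum>a\<leftarrow>as. synthetic_div (poly_of_roots as) a)"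
proof (induct as)
  case (Cons a as)
  define P where "P = poly_of_roots as"
  have factor: "[:-a, 1:] * synthetic_div P b = synthetic_div ([:-a, 1:] * P) b"
    if "b \<in> set as" for b
  proof -
    have "P = [:-b, 1:] * synthetic_div P b"
      using synthetic_div_correct'[of b P] poly_poly_of_roots_root[OF that] by (simp add: P_def)
    then have "[:-a, 1:] * P = [:-b, 1:] * ([:-a, 1:] * synthetic_div P b)"
      by (metis mult.left_commute)
    then show ?thesis
      by (metis synthetic_div_linear_mult)
  qed
  have "pderiv ([:-a, 1:] * P) = P + [:-a, 1:] * (\<Sum>b\<leftarrow>as. synthetic_div P b)"
    using Cons by (simp add: pderiv_mult pderiv_pCons P_def del: mult_pCons_left)
  also have "[:-a, 1:] * (\<Sum>b\<leftarrow>as. synthetic_div P b) = (\<Sum>b\<leftarrow>as. [:-a, 1:] * synthetic_div P b)"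
    by (simp add: sum_list_const_mult del: mult_pCons_left)
  also have "\<dots> = (\<Sum>b\<leftarrow>as. synthetic_div ([:-a, 1:] * P) b)"
    using factor by (intro arg_cong[where f = sum_list] map_cong) auto
  finally show ?case
    by (simp add: P_def synthetic_div_linear_mult del: mult_pCons_left)
qed simp

lemma coeff_sum_list: "coeff (\<Sum>x\<leftarrow>xs. f x) n = (\<Sum>x\<leftarrow>xs. coeff (f x) n)"
  by (induct xs) auto

lemma sum_list_sum_swap: "(\<Sum>a\<leftarrow>as. \<Sum>i\<in>I. f a i) = (\<Sum>i\<in>I. \<Sum>a\<leftarrow>as. f a i)"
  by (induct as) (auto simp: sum.distrib)

text \<open>Comparing coefficients in \<open>P' = \<Sum>\<^sub>a P / (x - a)\<close> gives Newton's identities;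
  evaluating \<open>P\<close> at its roots gives a linear recurrence for the power sums.\<close>

lemma newton_identity:
  fixes as :: "'a::idom list"
  shows "of_nat (Suc l) * coeff (poly_of_roots as) (Suc l) =
           (\<Sum>i=Suc l..length as. coeff (poly_of_roots as) i * power_sum as (i - Suc l))"
proof -
  have "of_nat (Suc l) * coeff (poly_of_roots as) (Suc l) = coeff (pderiv (poly_of_roots as)) l"
    by (simp add: coeff_pderiv)
  also have "\<dots> = (\<Sum>a\<leftarrow>as. \<Sum>i=Suc l..length as. coeff (poly_of_roots as) i * a ^ (i - Suc l))"
    by (simp add: pderiv_poly_of_roots coeff_sum_list
        coeff_synthetic_div[of "poly_of_roots as" "length as"] cong: map_cong)
  also have "\<dots> = (\<Sum>i=Suc l..length as. coeff (poly_of_roots as) i * power_sum as (i - Suc l))"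
    by (simp add: sum_list_sum_swap power_sum_def sum_list_const_mult)
  finally show ?thesis .
qed

lemma power_sum_recurrence:
  fixes as :: "'a::idom list"
  shows "(\<Sum>i\<le>length as. coeff (poly_of_roots as) i * power_sum as (i + m)) = 0"
proof -
  have "(\<Sum>i\<le>length as. coeff (poly_of_roots as) i * power_sum as (i + m)) =
        (\<Sum>a\<leftarrow>as. \<Sum>i\<le>length as. coeff (poly_of_roots as) i * a ^ (i + m))"
    by (simp add: power_sum_def sum_list_const_mult sum_list_sum_swap)
  also have "\<dots> = (\<Sum>a\<leftarrow>as. a ^ m * poly (poly_of_roots as) a)"
    by (simp add: poly_altdef sum_distrib_left power_add mult_ac)
  also have "\<dots> = 0"
    by (simp add: poly_poly_of_roots_root cong: map_cong)
  finally show ?thesis .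
qed

lemma power_sum_newton_low:
  fixes as :: "'a::idom list"
  assumes "0 < s" "s < length as"
  shows "power_sum as s = of_nat (length as - s) * coeff (poly_of_roots as) (length as - s) -
           (\<Sum>i=length as - s..<length as.
              coeff (poly_of_roots as) i * power_sum as (i - (length as - s)))"
proof -
  have "of_nat (length as - s) * coeff (poly_of_roots as) (length as - s) =
        (\<Sum>i=length as - s..length as.
           coeff (poly_of_roots as) i * power_sum as (i - (length as - s)))"
    using newton_identity[of "length as - s - 1" as] assms by (simp add: Suc_diff_Suc)
  also have "\<dots> = (\<Sum>i=length as - s..<length as.
                       coeff (poly_of_roots as) i * power_sum as (i - (length as - s))) +
                    power_sum as s"
    using assms by (simp add: atLeastLessThanSuc_atLeastAtMost[symmetric])
  finally show ?thesis
    by (simp add: algebra_simps)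
qed

lemma power_sum_newton_high:
  fixes as :: "'a::idom list"
  assumes "length as \<le> s"
  shows "power_sum as s =
           - (\<Sum>i<length as. coeff (poly_of_roots as) i * power_sum as (i + (s - length as)))"
proof -
  have "0 = (\<Sum>i\<le>length as. coeff (poly_of_roots as) i * power_sum as (i + (s - length as)))"
    by (rule power_sum_recurrence[symmetric])
  also have "\<dots> = (\<Sum>i<length as. coeff (poly_of_roots as) i * power_sum as (i + (s - length as))) +
                    power_sum as s"
    using assms by (simp add: lessThan_Suc_atMost[symmetric])
  finally show ?thesis
    by (simp add: eq_neg_iff_add_eq_0 add.commute)
qed

lemma coeff_poly_of_roots_recurrence:
  fixes as :: "'a::idom list"
  assumes "j < length as"
  shows "(of_nat j - of_nat (length as)) * coeff (poly_of_roots as) j =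
           (\<Sum>i=Suc j..length as. coeff (poly_of_roots as) i * power_sum as (i - j))"
proof (cases j)
  case 0
  have "0 = (\<Sum>i\<le>length as. coeff (poly_of_roots as) i * power_sum as (i + 0))"
    by (rule power_sum_recurrence[symmetric])
  also have "\<dots> = of_nat (length as) * coeff (poly_of_roots as) 0 +
                    (\<Sum>i=Suc 0..length as. coeff (poly_of_roots as) i * power_sum as i)"
    by (simp add: atMost_atLeast0 sum.atLeast_Suc_atMost power_sum_0)
  finally show ?thesis
    using 0 by (simp add: minus_unique)
next
  case (Suc l)
  have "of_nat j * coeff (poly_of_roots as) j =
        (\<Sum>i=j..length as. coeff (poly_of_roots as) i * power_sum as (i - j))"
    using newton_identity[of l as] Suc by simp
  also have "\<dots> = of_nat (length as) * coeff (poly_of_roots as) j +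
                    (\<Sum>i=Suc j..length as. coeff (poly_of_roots as) i * power_sum as (i - j))"
    using assms by (simp add: sum.atLeast_Suc_atMost power_sum_0)
  finally show ?thesis
    by (simp add: algebra_simps)
qed

lemma power_sum_in_Rats:
  fixes as :: "'a::field_char_0 list"
  assumes "\<And>i. coeff (poly_of_roots as) i \<in> \<rat>"
  shows "power_sum as s \<in> \<rat>"
proof (induct s rule: less_induct)
  case (less s)
  consider "s = 0" | "0 < s" "s < length as" | "length as \<le> s"
    by linarith
  then show ?case
  proof cases
    case 1
    then show ?thesis
      by (simp add: power_sum_0)
  next
    case 2
    then show ?thesis
      unfolding power_sum_newton_low[OF 2]
      by (intro Rats_diff Rats_mult Rats_sum assms less) auto
  next
    case 3
    then show ?thesis
      unfolding power_sum_newton_high[OF 3]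
      by (intro Rats_minus_iff[THEN iffD2] Rats_mult Rats_sum assms less) auto
  qed
qed

lemma coeff_poly_of_roots_in_Rats:
  fixes as :: "'a::field_char_0 list"
  assumes "\<And>s. power_sum as s \<in> \<rat>"
  shows "coeff (poly_of_roots as) j \<in> \<rat>"
proof (induct "length as - j" arbitrary: j rule: less_induct)
  case less
  show ?case
  proof (cases "j < length as")
    case True
    have "coeff (poly_of_roots as) j =
          (\<Sum>i=Suc j..length as. coeff (poly_of_roots as) i * power_sum as (i - j)) /
          (of_nat j - of_nat (length as))"
      using coeff_poly_of_roots_recurrence[OF True] True by (simp add: field_simps)
    also have "\<dots> \<in> \<rat>"
      by (intro Rats_divide Rats_sum Rats_mult assms less) auto
    finally show ?thesis .
  next
    case False
    then show ?thesis
      by (cases "j = length as") (auto simp: coeff_eq_0)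
  qed
qed

text \<open>Graeffe's method: the power sums of the \<open>a^h\<close> are power sums of the \<open>a\<close>.\<close>

lemma coeff_poly_of_roots_powers_in_Rats:
  fixes as :: "'a::field_char_0 list"
  assumes "\<And>i. coeff (poly_of_roots as) i \<in> \<rat>"
  shows "coeff (poly_of_roots (map (\<lambda>a. a ^ h) as)) j \<in> \<rat>"
  by (rule coeff_poly_of_roots_in_Rats) (simp add: power_sum_map_power power_sum_in_Rats[OF assms])

section \<open>Norms of rational expressions in the roots of \<open>x^h - c\<close>\<close>

lemma prod_list_map_mult:
  "(\<Prod>x\<leftarrow>xs. f x * g x) = (\<Prod>x\<leftarrow>xs. f x) * (\<Prod>x\<leftarrow>xs. g x :: 'a::comm_monoid_mult)"
  by (induct xs) (auto simp: mult_ac)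

lemma prod_list_map_const_mult:
  "(\<Prod>x\<leftarrow>xs. c * f x) = c ^ length xs * (\<Prod>x\<leftarrow>xs. f x :: 'a::comm_monoid_mult)"
  by (induct xs) (auto simp: mult_ac)

lemma prod_list_map_swap:
  "(\<Prod>a\<leftarrow>as. \<Prod>b\<leftarrow>bs. f a b) = (\<Prod>b\<leftarrow>bs. \<Prod>a\<leftarrow>as. f a b :: 'a::comm_monoid_mult)"
  by (induct as) (auto simp: prod_list_map_mult map_replicate_const)

text \<open>The resultant of \<open>Q\<close> and \<open>x^h - c\<close>, computed from either factorisation.\<close>

lemma prod_poly_at_roots_of_binomial:
  fixes rs ss :: "'a::comm_ring_1 list"
  assumes "poly_of_roots ss = monom 1 h - [:c:]"
  shows "(\<Prod>s\<leftarrow>ss. poly (smult l (poly_of_roots rs)) s) =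
           l ^ length ss * (- 1) ^ (Suc (length ss) * length rs) *
           poly (poly_of_roots (map (\<lambda>r. r ^ h) rs)) c"
proof -
  have "(\<Prod>s\<leftarrow>ss. poly (smult l (poly_of_roots rs)) s) =
        l ^ length ss * (\<Prod>r\<leftarrow>rs. \<Prod>s\<leftarrow>ss. s - r)"
    by (simp add: poly_poly_of_roots prod_list_map_const_mult prod_list_map_swap[of _ ss])
  also have "(\<Prod>r\<leftarrow>rs. \<Prod>s\<leftarrow>ss. s - r) =
             (\<Prod>r\<leftarrow>rs. (- 1) ^ length ss * poly (poly_of_roots ss) r)"
    by (simp add: poly_poly_of_roots flip: prod_list_map_const_mult)
  also have "\<dots> = (\<Prod>r\<leftarrow>rs. (- 1) ^ Suc (length ss) * (c - r ^ h))"
    by (simp add: assms poly_monom algebra_simps)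
  also have "\<dots> = (- 1) ^ (Suc (length ss) * length rs) *
                    poly (poly_of_roots (map (\<lambda>r. r ^ h) rs)) c"
    by (simp only: prod_list_map_const_mult power_mult poly_poly_of_roots map_map o_def)
  finally show ?thesis
    by (simp only: mult.assoc)
qed

lemma complex_poly_eq_smult_poly_of_roots:
  fixes p :: "complex poly"
  obtains as where "p = smult (lead_coeff p) (poly_of_roots as)" "length as = degree p"
proof -
  obtain as where as: "mset as = proots p"
    using ex_mset by blast
  have "(\<Prod>x\<in>#proots p. [:-x, 1:]) = poly_of_roots as"
    unfolding poly_of_roots_def by (simp flip: as prod_mset_prod_list)
  then have "p = smult (lead_coeff p) (poly_of_roots as)"
    using complex_poly_decompose_multiset[of p] by simp
  moreover have "length as = degree p"
    using as size_proots_complex[of p] by (metis size_mset)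
  ultimately show ?thesis
    using that by blast
qed

definition Gaussian_Rats :: "complex set" where
  "Gaussian_Rats = {z. Re z \<in> \<rat> \<and> Im z \<in> \<rat>}"

lemma Gaussian_Rats_iff: "z \<in> Gaussian_Rats \<longleftrightarrow> Re z \<in> \<rat> \<and> Im z \<in> \<rat>"
  by (simp add: Gaussian_Rats_def)

lemma complex_of_real_of_rat: "complex_of_real (of_rat r) = of_rat r"
  by (cases r) (simp add: of_rat_rat)

lemma Rats_subset_Gaussian_Rats: "z \<in> \<rat> \<Longrightarrow> z \<in> Gaussian_Rats"
  by (induct rule: Rats_induct) (simp add: Gaussian_Rats_iff flip: complex_of_real_of_rat)

lemma Gaussian_Rats_mult [intro]: "a \<in> Gaussian_Rats \<Longrightarrow> b \<in> Gaussian_Rats \<Longrightarrow> a * b \<in> Gaussian_Rats"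
  by (simp add: Gaussian_Rats_iff)

lemma Gaussian_Rats_divide [intro]: "a \<in> Gaussian_Rats \<Longrightarrow> b \<in> Gaussian_Rats \<Longrightarrow> a / b \<in> Gaussian_Rats"
  by (simp add: Gaussian_Rats_iff Re_divide Im_divide)

lemma Gaussian_Rats_power [intro]: "a \<in> Gaussian_Rats \<Longrightarrow> a ^ n \<in> Gaussian_Rats"
  by (induct n) (auto intro: Rats_subset_Gaussian_Rats)

lemma Gaussian_Rats_sum [intro]: "(\<And>x. x \<in> A \<Longrightarrow> f x \<in> Gaussian_Rats) \<Longrightarrow> sum f A \<in> Gaussian_Rats"
  by (induct A rule: infinite_finite_induct) (auto simp: Gaussian_Rats_iff)

lemma poly_in_Gaussian_Rats:
  "(\<And>i. coeff p i \<in> \<rat>) \<Longrightarrow> z \<in> Gaussian_Rats \<Longrightarrow> poly p z \<in> Gaussian_Rats"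
  unfolding poly_altdef by (auto intro: Rats_subset_Gaussian_Rats)

text \<open>The norm from \<open>\<rat>(s)\<close> down to \<open>\<rat>(c)\<close>, where \<open>s^h = c\<close>, of a rational
  expression in \<open>s\<close>.\<close>

lemma prod_poly_at_roots_in_Gaussian_Rats:
  fixes Q :: "complex poly"
  assumes Q: "\<And>i. coeff Q i \<in> \<rat>"
    and ss: "poly_of_roots ss = monom 1 h - [:c:]" and c: "c \<in> Gaussian_Rats"
  shows "(\<Prod>s\<leftarrow>ss. poly Q s) \<in> Gaussian_Rats"
proof (cases "Q = 0")
  case True
  then show ?thesis
    by (induct ss) (auto simp: Gaussian_Rats_iff)
next
  case False
  obtain rs where rs: "Q = smult (lead_coeff Q) (poly_of_roots rs)"
    using complex_poly_eq_smult_poly_of_roots by blast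
  have lc: "lead_coeff Q \<in> \<rat>" "lead_coeff Q \<noteq> 0"
    using Q False by auto
  have "coeff (poly_of_roots rs) i \<in> \<rat>" for i
  proof -
    have "coeff Q i = lead_coeff Q * coeff (poly_of_roots rs) i"
      by (metis coeff_smult rs(1))
    then have "coeff (poly_of_roots rs) i = coeff Q i / lead_coeff Q"
      using lc(2) by simp
    then show ?thesis
      using Q lc(1) by simp
  qed
  then have "poly (poly_of_roots (map (\<lambda>r. r ^ h) rs)) c \<in> Gaussian_Rats"
    by (intro poly_in_Gaussian_Rats coeff_poly_of_roots_powers_in_Rats c)
  then show ?thesis
    using lc(1) by (subst rs, subst prod_poly_at_roots_of_binomial[OF ss])
      (rule Gaussian_Rats_mult, rule Rats_subset_Gaussian_Rats, simp_all)
qed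

section \<open>Norm forms \<open>E^2 - x Q^2 = x^(2h) + C^2\<close>\<close>

lemma poly_of_roots_binomial:
  fixes c :: complex
  assumes "h \<ge> 1"
  obtains ss where "poly_of_roots ss = monom 1 h - [:c:]" "length ss = h"
proof -
  define P where "P = monom 1 h - [:c:]"
  have coeff_P: "coeff P i = (if i = h then 1 else if i = 0 then - c else 0)" for i
    using assms by (auto simp: P_def coeff_monom coeff_pCons split: nat.split)
  have degree_P: "degree P = h"
    by (rule antisym, rule degree_le) (auto simp: coeff_P intro: le_degree)
  then have "lead_coeff P = 1"
    by (simp add: coeff_P)
  with degree_P obtain ss where "P = poly_of_roots ss" "length ss = h"
    using complex_poly_eq_smult_poly_of_roots[of P] by (metis smult_1_left)
  then show ?thesis
    using that by (simp add: P_def)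
qed

lemma prod_roots_binomial:
  fixes ss :: "'a::comm_ring_1 list"
  assumes "poly_of_roots ss = monom 1 h - [:c:]" "length ss = h" "h \<ge> 1"
  shows "(\<Prod>s\<leftarrow>ss. s) = - ((- 1) ^ h * c)"
proof -
  have "(- 1) ^ h * (\<Prod>s\<leftarrow>ss. s) = (\<Prod>s\<leftarrow>ss. - 1 * s)"
    using assms(2) by (subst prod_list_map_const_mult) simp
  also have "\<dots> = - c"
    using assms(1,3) poly_poly_of_roots[of ss 0] by (simp add: poly_monom power_0_left)
  finally have "(- 1) ^ h * ((- 1) ^ h * (\<Prod>s\<leftarrow>ss. s)) = (- 1) ^ h * - c"
    by simp
  then show ?thesis
    by (simp flip: mult.assoc power_mult_distrib)
qed

lemma pderiv_norm_form_at_common_root: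
  fixes E Q :: "'a::idom poly"
  assumes "poly E s = 0" "poly Q s = 0"
  shows "poly (pderiv (E\<^sup>2 - [:0, 1:] * Q\<^sup>2)) s = 0"
  using assms by (simp add: pderiv_diff pderiv_mult pderiv_pCons power2_eq_square)

lemma poly_pderiv_binomial_nonzero:
  fixes s B :: "'a::field_char_0"
  assumes "n > 0" "B \<noteq> 0" "poly (monom 1 n + [:B:]) s = 0"
  shows "poly (pderiv (monom 1 n + [:B:])) s \<noteq> 0"
proof -
  have "s \<noteq> 0"
    using assms by (auto simp: poly_monom power_0_left)
  then show ?thesis
    using assms(1) by (simp add: pderiv_add pderiv_monom poly_monom pderiv_pCons)
qed

lemma two_Re_square_if_square_imaginary:
  fixes w :: complex
  assumes "w\<^sup>2 = \<i> * of_real C \<or> w\<^sup>2 = - (\<i> * of_real C)" "C \<ge> 0"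
  shows "C = 2 * Re w ^ 2"
proof -
  have "Re (w\<^sup>2) = 0" "\<bar>Im (w\<^sup>2)\<bar> = C"
    using assms by auto
  then have "Re w ^ 2 = Im w ^ 2" "\<bar>2 * Re w * Im w\<bar> = C"
    by (simp_all add: Re_power2 Im_power2)
  moreover from this(1) have "\<bar>Re w\<bar> = \<bar>Im w\<bar>"
    by (metis power2_abs abs_ge_zero power2_eq_iff_nonneg)
  ultimately have "C = 2 * (\<bar>Re w\<bar> * \<bar>Re w\<bar>)"
    by (simp add: abs_mult)
  then show ?thesis
    by (simp add: power2_eq_square)
qed

text \<open>If \<open>x^(2h) + C^2 = E^2 - x Q^2\<close>, then at every root \<open>s\<close> of \<open>x^h - i C\<close> the number
  \<open>s\<close> is the square \<open>(E(s) / Q(s))^2\<close>; the product over all these roots exhibits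
  \<open>\<plusminus>i C\<close> as the square of a Gaussian rational.\<close>

lemma two_rat_square_if_norm_form:
  fixes E Q :: "complex poly" and C :: real
  assumes E: "\<And>i. coeff E i \<in> \<rat>" and Q: "\<And>i. coeff Q i \<in> \<rat>"
    and h: "h \<ge> 1" and C: "C > 0" "C \<in> \<rat>"
    and eq: "E\<^sup>2 - [:0, 1:] * Q\<^sup>2 = monom 1 (2 * h) + [:of_real (C\<^sup>2):]"
  shows "\<exists>a\<in>\<rat>. C = 2 * a\<^sup>2"
proof -
  define c where "c = \<i> * of_real C"
  obtain ss where ss: "poly_of_roots ss = monom 1 h - [:c:]" "length ss = h"
    using poly_of_roots_binomial[OF h] .
  have root: "poly (monom 1 (2 * h) + [:of_real (C\<^sup>2):]) s = 0" if "s \<in> set ss" for s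
  proof -
    have "s ^ h = c"
      using poly_poly_of_roots_root[OF that] ss(1) by (simp add: poly_monom)
    then have "s ^ (2 * h) = c\<^sup>2"
      by (metis power_mult mult.commute)
    then show ?thesis
      by (simp add: poly_monom c_def power_mult_distrib)
  qed
  have E_sq: "poly E s ^ 2 = s * poly Q s ^ 2" if "s \<in> set ss" for s
    using root[OF that] unfolding eq[symmetric] by simp
  have Q_nz: "poly Q s \<noteq> 0" if "s \<in> set ss" for s
  proof
    assume "poly Q s = 0"
    with E_sq[OF that] have "poly E s = 0"
      by simp
    with \<open>poly Q s = 0\<close> have "poly (pderiv (monom 1 (2 * h) + [:of_real (C\<^sup>2):])) s = 0"
      by (metis eq pderiv_norm_form_at_common_root)
    moreover have "poly (pderiv (monom 1 (2 * h) + [:of_real (C\<^sup>2):])) s \<noteq> 0"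
      using h C root[OF that] by (intro poly_pderiv_binomial_nonzero) auto
    ultimately show False
      by contradiction
  qed
  define w where "w = (\<Prod>s\<leftarrow>ss. poly E s) / (\<Prod>s\<leftarrow>ss. poly Q s)"
  have "c \<in> Gaussian_Rats"
    using C by (simp add: c_def Gaussian_Rats_iff)
  then have w: "w \<in> Gaussian_Rats"
    unfolding w_def
    by (intro Gaussian_Rats_divide prod_poly_at_roots_in_Gaussian_Rats[OF E ss(1)]
        prod_poly_at_roots_in_Gaussian_Rats[OF Q ss(1)])
  have "(\<Prod>s\<leftarrow>ss. poly E s)\<^sup>2 = (\<Prod>s\<leftarrow>ss. poly E s ^ 2)"
    by (simp add: power2_eq_square prod_list_map_mult)
  also have "\<dots> = (\<Prod>s\<leftarrow>ss. s * poly Q s ^ 2)"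
    by (simp add: E_sq cong: map_cong)
  also have "\<dots> = (\<Prod>s\<leftarrow>ss. s) * (\<Prod>s\<leftarrow>ss. poly Q s)\<^sup>2"
    by (simp add: power2_eq_square prod_list_map_mult)
  finally have "w\<^sup>2 = (\<Prod>s\<leftarrow>ss. s)"
    using Q_nz by (auto simp: w_def power_divide prod_list_zero_iff)
  also have "\<dots> = - ((- 1) ^ h * c)"
    using prod_roots_binomial[OF ss h] .
  finally have "w\<^sup>2 = \<i> * of_real C \<or> w\<^sup>2 = - (\<i> * of_real C)"
    by (cases "even h") (auto simp: c_def)
  then have "C = 2 * (Re w)\<^sup>2"
    using C(1) by (intro two_Re_square_if_square_imaginary) auto
  then show ?thesis
    using w by (auto simp: Gaussian_Rats_iff)
qed

lemma of_rat_poly_add: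
  "map_poly of_rat (p + q) = (map_poly of_rat p + map_poly of_rat q :: 'a::field_char_0 poly)"
  by (intro poly_eqI) (simp add: coeff_map_poly of_rat_add)

lemma of_rat_poly_diff:
  "map_poly of_rat (p - q) = (map_poly of_rat p - map_poly of_rat q :: 'a::field_char_0 poly)"
  by (intro poly_eqI) (simp add: coeff_map_poly of_rat_diff)

lemma of_rat_poly_mult:
  "map_poly of_rat (p * q) = (map_poly of_rat p * map_poly of_rat q :: 'a::field_char_0 poly)"
  by (intro poly_eqI) (simp add: coeff_map_poly coeff_mult of_rat_sum of_rat_mult)

lemma of_rat_poly_power:
  "map_poly of_rat (p ^ n) = (map_poly of_rat p ^ n :: 'a::field_char_0 poly)"
  by (induct n) (simp_all add: of_rat_poly_mult)

lemma nat_eq_two_square_if_rat: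
  fixes C :: nat and a :: real
  assumes a: "a \<in> \<rat>" and eq: "real C = 2 * a\<^sup>2" and C: "C > 0"
  shows "\<exists>d>0. C = 2 * d\<^sup>2"
proof -
  obtain p q :: nat where q: "q \<noteq> 0" and pq: "\<bar>a\<bar> = real p / real q" and cop: "coprime p q"
    using Rats_abs_nat_div_natE[OF a] by blast
  have "a\<^sup>2 = (real p / real q)\<^sup>2"
    using pq by (metis power2_abs)
  then have "real (C * q\<^sup>2) = real (2 * p\<^sup>2)"
    using eq q by (simp add: field_simps)
  then have pq_eq: "C * q\<^sup>2 = 2 * p\<^sup>2"
    by (simp only: of_nat_eq_iff)
  moreover have "coprime (q\<^sup>2) (p\<^sup>2)"
    using cop by (simp add: coprime_commute)
  ultimately have "q\<^sup>2 dvd 2"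
    by (metis coprime_dvd_mult_left_iff dvd_triv_right)
  then have "q\<^sup>2 \<le> 2"
    by (rule dvd_imp_le) simp
  then have "q < 2"
    using power_mono[of 2 q 2] by (cases "q < 2") auto
  then have "q = 1"
    using q by simp
  then show ?thesis
    using pq_eq C by (auto intro!: exI[of _ p])
qed

lemma nat_eq_two_square_if_norm_form:
  fixes E Q :: "rat poly" and C h :: nat
  assumes h: "h \<ge> 1" and C: "C > 0"
    and eq: "E\<^sup>2 - [:0, 1:] * Q\<^sup>2 = monom 1 (2 * h) + [:of_nat C ^ 2:]"
  shows "\<exists>d>0. C = 2 * d\<^sup>2"
proof -
  have "map_poly of_rat (E\<^sup>2 - [:0, 1:] * Q\<^sup>2) =
        (map_poly of_rat (monom 1 (2 * h) + [:of_nat C ^ 2:]) :: complex poly)"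
    using eq by simp
  then have eq': "(map_poly of_rat E)\<^sup>2 - [:0, 1:] * (map_poly of_rat Q)\<^sup>2 =
             monom 1 (2 * h) + [:complex_of_real ((real C)\<^sup>2):]"
    by (simp add: of_rat_poly_add of_rat_poly_diff of_rat_poly_mult of_rat_poly_power
        map_poly_monom map_poly_pCons of_rat_power)
  have "\<exists>a\<in>\<rat>. real C = 2 * a\<^sup>2"
    by (rule two_rat_square_if_norm_form[OF _ _ h _ _ eq']) (use C in \<open>auto simp: coeff_map_poly\<close>)
  then show ?thesis
    using C nat_eq_two_square_if_rat by blast
qed

section \<open>Capelli's lemma for \<open>F(x^2)\<close>\<close>

abbreviation pcompose_sq :: "'a::comm_semiring_1 poly \<Rightarrow> 'a poly" where
  "pcompose_sq p \<equiv> pcompose p [:0, 0, 1:]"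

abbreviation pcompose_neg :: "'a::comm_ring_1 poly \<Rightarrow> 'a poly" where
  "pcompose_neg p \<equiv> pcompose p [:0, -1:]"

definition even_part :: "'a::comm_semiring_0 poly \<Rightarrow> 'a poly" where
  "even_part p = (\<Sum>i\<le>degree p. monom (coeff p (2 * i)) i)"

definition odd_part :: "'a::comm_semiring_0 poly \<Rightarrow> 'a poly" where
  "odd_part p = (\<Sum>i\<le>degree p. monom (coeff p (2 * i + 1)) i)"

lemma coeff_even_part [simp]: "coeff (even_part p) i = coeff p (2 * i)"
  by (auto simp: even_part_def coeff_sum coeff_monom coeff_eq_0)

lemma coeff_odd_part [simp]: "coeff (odd_part p) i = coeff p (2 * i + 1)"
  by (auto simp: odd_part_def coeff_sum coeff_monom coeff_eq_0)

lemma coeff_pcompose_sq: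
  "coeff (pcompose_sq p) n = (if even n then coeff p (n div 2) else 0)"
proof (induct p arbitrary: n)
  case (pCons a p)
  then show ?case
    by (auto simp: pcompose_pCons coeff_pCons split: nat.split)
qed simp

lemma pcompose_sq_eq_iff [simp]: "pcompose_sq p = pcompose_sq q \<longleftrightarrow> p = q"
proof
  assume "pcompose_sq p = pcompose_sq q"
  then have "coeff (pcompose_sq p) (2 * n) = coeff (pcompose_sq q) (2 * n)" for n
    by simp
  then show "p = q"
    by (intro poly_eqI) (simp add: coeff_pcompose_sq)
qed simp

lemma pcompose_sq_eq_0_iff [simp]: "pcompose_sq p = 0 \<longleftrightarrow> p = 0"
  using pcompose_sq_eq_iff[of p 0] by simp

lemma degree_pcompose_sq [simp]: "degree (pcompose_sq (p :: 'a::idom poly)) = 2 * degree p"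
  by (simp add: degree_pcompose)

lemma lead_coeff_pcompose_sq [simp]: "lead_coeff (pcompose_sq (p :: 'a::idom poly)) = lead_coeff p"
  by (simp add: coeff_pcompose_sq)

lemma even_odd_part_decomp:
  "p = pcompose_sq (even_part p) + [:0, 1:] * pcompose_sq (odd_part p)"
  by (rule poly_eqI) (auto simp: coeff_pcompose_sq coeff_pCons elim!: oddE split: nat.split)

lemma pcompose_neg_pcompose_sq [simp]:
  "pcompose_neg (pcompose_sq p) = pcompose_sq (p :: 'a::comm_ring_1 poly)"
  by (simp add: pcompose_pCons flip: pcompose_assoc)

lemma mult_pcompose_neg:
  fixes p :: "'a::comm_ring_1 poly"
  shows "p * pcompose_neg p = pcompose_sq ((even_part p)\<^sup>2 - [:0, 1:] * (odd_part p)\<^sup>2)"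
proof -
  define A B where "A = pcompose_sq (even_part p)" and "B = pcompose_sq (odd_part p)"
  have p: "p = A + [:0, 1:] * B"
    unfolding A_def B_def by (rule even_odd_part_decomp)
  have "pcompose_neg p = A - [:0, 1:] * B"
    by (subst p) (simp add: A_def B_def pcompose_add pcompose_mult pcompose_pCons)
  then have "p * pcompose_neg p = (A + [:0, 1:] * B) * (A - [:0, 1:] * B)"
    using p by simp
  also have "\<dots> = A\<^sup>2 - [:0, 0, 1:] * B\<^sup>2"
    by (simp add: algebra_simps power2_eq_square)
  finally show ?thesis
    by (simp add: A_def B_def pcompose_diff pcompose_mult pcompose_pCons power2_eq_square)
qed

lemma pcompose_neg_eq_self_imp_even:
  fixes p :: "'a::field_char_0 poly"
  assumes "pcompose_neg p = p"
  shows "p = pcompose_sq (even_part p)"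
proof -
  have "odd_part p = 0"
  proof (rule poly_eqI)
    fix i
    have "- coeff p (2 * i + 1) = coeff p (2 * i + 1)"
      using arg_cong[OF assms, of "\<lambda>q. coeff q (2 * i + 1)"] by (simp add: coeff_pcompose_linear)
    then show "coeff (odd_part p) i = coeff 0 i"
      by simp
  qed
  then show ?thesis
    using even_odd_part_decomp[of p] by simp
qed

lemma dvd_pcompose_sq_pcompose_neg:
  "g dvd pcompose_sq F \<Longrightarrow> pcompose_neg g dvd pcompose_sq (F :: 'a::comm_ring_1 poly)"
  by (metis dvdE dvdI pcompose_mult pcompose_neg_pcompose_sq)

lemma pcompose_sq_dvd_pcompose_sq_imp_dvd:
  fixes p q :: "'a::field poly"
  assumes "pcompose_sq p dvd pcompose_sq q"
  shows "p dvd q"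
proof (cases "p = 0")
  case True
  then show ?thesis
    using assms by simp
next
  case False
  have "pcompose_sq q = pcompose_sq p * pcompose_sq (q div p) + pcompose_sq (q mod p)"
    by (simp flip: pcompose_mult pcompose_add)
  with assms have r: "pcompose_sq p dvd pcompose_sq (q mod p)"
    by (metis dvd_add_right_iff dvd_triv_left)
  have "q mod p = 0"
  proof (rule ccontr)
    assume nz: "q mod p \<noteq> 0"
    then have "degree (pcompose_sq p) \<le> degree (pcompose_sq (q mod p))"
      using r by (intro dvd_imp_degree_le) simp_all
    with nz False show False
      using degree_mod_less'[of p q] by simp
  qed
  then show ?thesis
    by (simp add: mod_eq_0_iff_dvd)
qed

lemma degree_ge_1_if_not_unit: "(p :: 'a::field poly) \<noteq> 0 \<Longrightarrow> \<not> is_unit p \<Longrightarrow> degree p \<ge> 1"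
  using is_unit_iff_degree by fastforce

lemma
  fixes g :: "'a::idom poly"
  assumes "lead_coeff g = 1"
  defines "W \<equiv> (even_part g)\<^sup>2 - [:0, 1:] * (odd_part g)\<^sup>2"
  shows degree_norm_even_odd: "degree W = degree g"
    and lead_coeff_norm_even_odd: "lead_coeff W = (- 1) ^ degree g"
proof -
  have g0: "g \<noteq> 0" "pcompose_neg g \<noteq> 0"
    using assms by (auto simp: pcompose_eq_0_iff)
  have "pcompose_sq W = g * pcompose_neg g"
    by (simp add: W_def mult_pcompose_neg)
  moreover have "degree (g * pcompose_neg g) = 2 * degree g"
    using g0 by (simp add: degree_mult_eq degree_pcompose)
  moreover have "lead_coeff (g * pcompose_neg g) = (- 1) ^ degree g"
    using assms by (simp add: lead_coeff_mult coeff_pcompose_linear degree_pcompose)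
  ultimately show "degree W = degree g" "lead_coeff W = (- 1) ^ degree g"
    by (metis degree_pcompose_sq mult_left_cancel zero_neq_numeral, metis lead_coeff_pcompose_sq)
qed

lemma eq_norm_if_dvd_pcompose_sq:
  fixes F g :: "'a::field_char_0 poly"
  assumes F: "irreducible F" "lead_coeff F = 1"
    and g: "lead_coeff g = 1" "degree g \<ge> 1" "g * pcompose_neg g dvd pcompose_sq F"
  shows "F = smult ((- 1) ^ degree F) ((even_part g)\<^sup>2 - [:0, 1:] * (odd_part g)\<^sup>2)"
proof -
  define W where "W = (even_part g)\<^sup>2 - [:0, 1:] * (odd_part g)\<^sup>2"
  have W: "degree W = degree g" "lead_coeff W = (- 1) ^ degree g"
    using g(1) unfolding W_def by (rule degree_norm_even_odd, rule lead_coeff_norm_even_odd)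
  have "pcompose_sq W = g * pcompose_neg g"
    by (simp only: W_def mult_pcompose_neg)
  with g(3) have "W dvd F"
    by (metis pcompose_sq_dvd_pcompose_sq_imp_dvd)
  then obtain k where k: "F = W * k"
    by blast
  have "W \<noteq> 0"
    using W(2) by auto
  then have "\<not> is_unit W"
    using W g(2) by (simp add: is_unit_iff_degree)
  then have "is_unit k"
    using F(1) k by (auto dest: irreducibleD)
  then obtain \<kappa> where \<kappa>: "k = [:\<kappa>:]" "\<kappa> \<noteq> 0"
    by (auto simp: is_unit_poly_iff dvd_field_iff)
  then have "degree F = degree g" "\<kappa> * (- 1) ^ degree g = 1"
    using F(2) W k by (simp_all add: lead_coeff_mult)
  then have "\<kappa> = (- 1) ^ degree F"
    by (cases "even (degree g)") (auto simp: minus_equation_iff[of \<kappa>])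
  then show ?thesis
    using k \<kappa>(1) by (simp add: W_def)
qed

lemma even_if_dvd_pcompose_neg:
  fixes g :: "'a::field_char_0 poly"
  assumes g: "lead_coeff g = 1" "g dvd pcompose_neg g" and g0: "poly g 0 \<noteq> 0"
  shows "g = pcompose_sq (even_part g)"
proof -
  obtain k where k: "pcompose_neg g = g * k"
    using g(2) by blast
  have nz: "g \<noteq> 0" "pcompose_neg g \<noteq> 0"
    using g(1) by (auto simp: pcompose_eq_0_iff)
  have k0: "k \<noteq> 0"
    using k nz by auto
  moreover have "degree (pcompose_neg g) = degree g"
    by (simp add: degree_pcompose)
  ultimately have "degree k = 0"
    using k nz by (simp add: degree_mult_eq)
  then obtain \<kappa> where "k = [:\<kappa>:]"
    by (metis degree_eq_zeroE)
  moreover have "lead_coeff (pcompose_neg g) = (- 1) ^ degree g"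
    using g(1) by (simp add: coeff_pcompose_linear degree_pcompose)
  ultimately have neg: "pcompose_neg g = smult ((- 1) ^ degree g) g"
    using k k0 g(1) by (auto simp: degree_pcompose)
  have "even (degree g)"
  proof (rule ccontr)
    assume "odd (degree g)"
    then have "coeff g 0 = - coeff g 0"
      using arg_cong[OF neg, of "\<lambda>p. coeff p 0"] by (simp add: poly_0_coeff_0)
    then show False
      using g0 by (simp add: poly_0_coeff_0)
  qed
  then show ?thesis
    using neg by (intro pcompose_neg_eq_self_imp_even) simp
qed

text \<open>An irreducible monic factor \<open>g\<close> of \<open>F(x^2)\<close> of smaller degree cannot divide
  \<open>g(-x)\<close>, so \<open>g(x) g(-x)\<close> divides \<open>F(x^2)\<close> and \<open>\<plusminus>F\<close> is the norm \<open>g(\<surd>x) g(-\<surd>x)\<close>.\<close>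

lemma eq_norm_if_irreducible_factor_pcompose_sq:
  fixes F g :: "rat poly"
  assumes F: "irreducible F" "lead_coeff F = 1" "poly F 0 \<noteq> 0"
    and g: "irreducible g" "lead_coeff g = 1" "g dvd pcompose_sq F" "degree g < 2 * degree F"
  shows "\<exists>E Q. F = smult ((- 1) ^ degree F) (E\<^sup>2 - [:0, 1:] * Q\<^sup>2)"
proof -
  have g_deg: "degree g \<ge> 1"
    using g(1) by (intro degree_ge_1_if_not_unit) (auto dest: irreducible_not_unit)
  have "\<not> g dvd pcompose_neg g"
  proof
    assume "g dvd pcompose_neg g"
    moreover obtain m where "pcompose_sq F = g * m"
      using g(3) by blast
    from arg_cong[OF this, of "\<lambda>p. poly p 0"] have "poly g 0 \<noteq> 0"
      using F(3) by (auto simp: poly_pcompose)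
    ultimately have even: "g = pcompose_sq (even_part g)"
      using g(2) by (intro even_if_dvd_pcompose_neg)
    have "pcompose_sq (even_part g) dvd pcompose_sq F"
      using g(3) by (simp only: even[symmetric])
    then have "even_part g dvd F"
      by (rule pcompose_sq_dvd_pcompose_sq_imp_dvd)
    moreover have deg: "degree g = 2 * degree (even_part g)"
      using arg_cong[OF even, of degree] by simp
    moreover from this have "even_part g \<noteq> 0"
      using g_deg by auto
    moreover from calculation have "\<not> is_unit (even_part g)"
      using g_deg by (simp add: is_unit_iff_degree)
    ultimately have "F dvd even_part g"
      using F(1) by (metis irreducibleD')
    then show False
      using \<open>even_part g \<noteq> 0\<close> deg g(4)
      by (auto dest: dvd_imp_degree_le)
  qed
  moreover obtain k where k: "pcompose_sq F = pcompose_neg g * k"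
    using dvd_pcompose_sq_pcompose_neg[OF g(3)] by blast
  ultimately have "g dvd k"
    using g(1,3) by (metis prime_elem_dvd_multD prime_elem_iff_irreducible)
  then have "g * pcompose_neg g dvd pcompose_sq F"
    using k by (simp add: mult.commute)
  then show ?thesis
    using eq_norm_if_dvd_pcompose_sq[OF F(1,2) g(2) g_deg] by blast
qed

lemma monic_irreducible_factor:
  fixes F :: "rat poly"
  assumes "\<not> irreducible F" "degree F \<ge> 1"
  obtains g where "irreducible g" "lead_coeff g = 1" "g dvd F" "degree g < degree F"
proof -
  have "F \<noteq> 0"
    using assms(2) by auto
  moreover from this have "\<not> is_unit F"
    using assms(2) by (simp add: is_unit_iff_degree)
  ultimately obtain a c where ac: "F = a * c" "\<not> is_unit a" "\<not> is_unit c"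
    using assms(1) unfolding irreducible_def by blast
  with \<open>F \<noteq> 0\<close> have "a \<noteq> 0" "c \<noteq> 0"
    by auto
  then have "degree c \<ge> 1"
    using ac(3) degree_ge_1_if_not_unit by blast
  then have "degree a < degree F"
    using ac(1) \<open>a \<noteq> 0\<close> \<open>c \<noteq> 0\<close> by (simp add: degree_mult_eq)
  obtain p where p: "p dvd a" "prime p"
    using prime_divisor_exists[OF \<open>a \<noteq> 0\<close> ac(2)] by blast
  then have p0: "p \<noteq> 0" "irreducible p"
    by (auto intro: prime_elem_imp_irreducible)
  define g where "g = smult (inverse (lead_coeff p)) p"
  have g: "lead_coeff g = 1" "degree g = degree p" "p = g * [:lead_coeff p:]"
    using p0(1) by (simp_all add: g_def)
  then have "g dvd p"
    by (metis dvd_triv_left)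
  moreover have "degree p \<ge> 1"
    using p0 by (intro degree_ge_1_if_not_unit) (auto dest: irreducible_not_unit)
  then have "\<not> is_unit g"
    using g(1,2) by (subst is_unit_iff_degree) auto
  ultimately have "irreducible g"
    by (rule irreducible_mono[OF p0(2)])
  moreover have "degree p \<le> degree a"
    using p(1) \<open>a \<noteq> 0\<close> by (rule dvd_imp_degree_le)
  moreover have "g dvd F"
    using \<open>g dvd p\<close> p(1) ac(1) by (auto intro: dvd_trans)
  ultimately show ?thesis
    using that g \<open>degree a < degree F\<close> by simp
qed

section \<open>Irreducibility of \<open>x^n + B\<close>\<close>

lemma norm_prod_list_uminus_power:
  fixes as :: "'a::real_normed_field list"
  assumes "\<And>a. a \<in> set as \<Longrightarrow> norm a ^ n = R"
  shows "norm (\<Prod>a\<leftarrow>as. - a) ^ n = R ^ length as"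
  using assms by (induct as) (auto simp: norm_mult power_mult_distrib)

lemma poly_of_rat_poly:
  "poly (map_poly of_rat p) (of_rat x) = (of_rat (poly p x) :: 'a::field_char_0)"
  by (induct p) (auto simp: map_poly_pCons of_rat_add of_rat_mult)

lemma abs_poly_0_power_eq_if_dvd_binomial:
  fixes g :: "rat poly"
  assumes g: "lead_coeff g = 1" "g dvd monom 1 n + [:B:]" and n: "n > 0" and B: "B > 0"
  shows "\<bar>poly g 0\<bar> ^ n = B ^ degree g"
proof -
  define cg :: "complex poly" where "cg = map_poly of_rat g"
  have "lead_coeff cg = 1" "degree cg = degree g"
    using g(1) by (simp_all add: cg_def degree_map_poly coeff_map_poly)
  then obtain as where as: "cg = poly_of_roots as" "length as = degree g"
    using complex_poly_eq_smult_poly_of_roots[of cg] by (metis smult_1_left)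
  obtain k where "monom 1 n + [:B:] = g * k"
    using g(2) by blast
  then have "map_poly of_rat (monom 1 n + [:B:]) = cg * map_poly of_rat k"
    by (simp add: cg_def of_rat_poly_mult)
  then have dvd: "monom 1 n + [:of_rat B:] = cg * map_poly of_rat k"
    by (simp add: of_rat_poly_add map_poly_monom map_poly_pCons)
  have "cmod a ^ n = of_rat B" if "a \<in> set as" for a
  proof -
    have "a ^ n = - complex_of_real (of_rat B)"
      using poly_poly_of_roots_root[OF that] arg_cong[OF dvd, of "\<lambda>p. poly p a"] as(1)
      by (simp add: poly_monom eq_neg_iff_add_eq_0 complex_of_real_of_rat)
    then have "cmod (a ^ n) = \<bar>of_rat B\<bar>"
      by (simp only: norm_minus_cancel norm_of_real)
    then show ?thesis
      using B by (simp add: norm_power)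
  qed
  then have "cmod (\<Prod>a\<leftarrow>as. - a) ^ n = of_rat B ^ degree g"
    by (simp add: norm_prod_list_uminus_power as(2))
  moreover have "complex_of_real (of_rat (poly g 0)) = (\<Prod>a\<leftarrow>as. - a)"
    using poly_of_rat_poly[of g 0, where 'a = complex] as(1)
    by (simp add: cg_def poly_poly_of_roots complex_of_real_of_rat)
  ultimately have "of_rat (\<bar>poly g 0\<bar> ^ n) = (of_rat (B ^ degree g) :: real)"
    by (metis norm_of_real abs_of_rat of_rat_power)
  then show ?thesis
    by (simp only: of_rat_eq_iff)
qed

lemma nat_if_rat_power_eq_nat:
  fixes q :: rat
  assumes q: "q \<ge> 0" and eq: "q ^ n = of_nat N" and n: "n > 0"
  obtains z :: nat where "q = of_nat z"
proof -
  obtain a s where qa: "quotient_of q = (a, s)"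
    by (cases "quotient_of q")
  then have s0: "s > 0" and cop: "coprime a s" and q_eq: "q = of_int a / of_int s"
    by (auto intro: quotient_of_denom_pos quotient_of_coprime quotient_of_div)
  then have "(of_int a / of_int s) ^ n = (of_nat N :: rat)"
    using eq by simp
  then have "(of_int (a ^ n) :: rat) = of_int (int N * s ^ n)"
    using s0 by (simp add: power_divide field_simps)
  then have "a ^ n = int N * s ^ n"
    by (simp only: of_int_eq_iff)
  then have "s dvd a ^ n"
    using n by (metis dvd_mult dvd_refl dvd_power)
  moreover have "coprime (a ^ n) s"
    using cop by simp
  ultimately have "is_unit s"
    using coprime_absorb_right by blast
  then have "q = of_int a"
    using s0 q_eq by simp
  moreover from this have "a \<ge> 0"
    using q by simp
  ultimately have "q = of_nat (nat a)"
    by simp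
  then show ?thesis
    using that by blast
qed

lemma dvd_exponent_if_power_eq:
  fixes z m e u :: nat
  assumes eq: "z ^ u = m ^ e" and m: "m > 0" and u: "u > 0"
    and G: "Gcd ((\<lambda>p. multiplicity p m) ` prime_factors m) = 1"
  shows "u dvd e"
proof -
  have "z \<noteq> 0"
  proof
    assume "z = 0"
    with eq u have "m ^ e = 0"
      by (simp add: power_0_left)
    with m show False
      by simp
  qed
  have "u dvd e * multiplicity p m" if p: "p \<in> prime_factors m" for p
  proof -
    have "prime p"
      using p by auto
    then have "u * multiplicity p z = e * multiplicity p m"
      using arg_cong[OF eq, of "multiplicity p"] \<open>z \<noteq> 0\<close> m
      by (simp add: prime_elem_multiplicity_power_distrib)
    then show ?thesis
      by (metis dvd_triv_left)
  qed
  then have "u dvd Gcd ((*) e ` (\<lambda>p. multiplicity p m) ` prime_factors m)"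
    by (intro Gcd_greatest) auto
  also have "\<dots> = e"
    using G by (simp add: Gcd_mult)
  finally show ?thesis .
qed

lemma
  fixes B :: "'a::comm_ring_1"
  assumes "n > 0"
  shows degree_binomial: "degree (monom 1 n + [:B:]) = n"
    and lead_coeff_binomial: "lead_coeff (monom 1 n + [:B:]) = 1"
proof -
  show "degree (monom 1 n + [:B:]) = n"
    using assms by (intro antisym degree_le le_degree) (auto simp: coeff_pCons split: nat.split)
  then show "lead_coeff (monom 1 n + [:B:]) = 1"
    using assms by (simp add: coeff_pCons split: nat.split)
qed

lemma dvd_exponent_mult_degree_if_dvd_binomial:
  fixes g :: "rat poly" and m e u :: nat
  assumes g: "lead_coeff g = 1" "g dvd monom 1 u + [:of_nat (m ^ e):]" and u: "u > 0"
    and m: "m > 0" and G: "Gcd ((\<lambda>p. multiplicity p m) ` prime_factors m) = 1"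
  shows "u dvd e * degree g"
proof -
  have "\<bar>poly g 0\<bar> ^ u = of_nat (m ^ e) ^ degree g"
    using m by (intro abs_poly_0_power_eq_if_dvd_binomial[OF g u]) simp
  also have "\<dots> = of_nat (m ^ (e * degree g))"
    by (simp add: power_mult)
  finally have eq: "\<bar>poly g 0\<bar> ^ u = of_nat (m ^ (e * degree g))" .
  then obtain z :: nat where "\<bar>poly g 0\<bar> = of_nat z"
    using nat_if_rat_power_eq_nat[OF abs_ge_zero _ u] by blast
  with eq have "z ^ u = m ^ (e * degree g)"
    by (metis of_nat_eq_iff of_nat_power)
  then show ?thesis
    using dvd_exponent_if_power_eq m u G by blast
qed

lemma irreducible_binomial_if_coprime:
  fixes m e u :: nat
  assumes u: "u > 0" and m: "m > 0" and G: "Gcd ((\<lambda>p. multiplicity p m) ` prime_factors m) = 1"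
    and cop: "coprime e u"
  shows "irreducible (monom 1 u + [:of_nat (m ^ e):] :: rat poly)"
proof (rule ccontr)
  define F :: "rat poly" where "F = monom 1 u + [:of_nat (m ^ e):]"
  assume "\<not> irreducible (monom 1 u + [:of_nat (m ^ e):] :: rat poly)"
  then have "\<not> irreducible F"
    by (simp add: F_def)
  moreover have "degree F = u"
    using u by (simp add: F_def degree_binomial)
  ultimately obtain g where g: "irreducible g" "lead_coeff g = 1" "g dvd F" "degree g < u"
    using u by (auto elim: monic_irreducible_factor)
  have "u dvd e * degree g"
    using dvd_exponent_mult_degree_if_dvd_binomial[OF g(2) g(3)[unfolded F_def] u m G] .
  then have "u dvd degree g"
    using cop by (simp add: coprime_commute coprime_dvd_mult_right_iff)
  moreover have "degree g \<ge> 1"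
    using g(1) by (intro degree_ge_1_if_not_unit) (auto dest: irreducible_not_unit)
  ultimately show False
    using g(4) by (auto dest: dvd_imp_le)
qed

lemma pcompose_sq_binomial:
  "pcompose_sq (monom 1 n + [:B:]) = monom 1 (2 * n) + [:B :: 'a::comm_ring_1:]"
proof (rule poly_eqI)
  fix i
  show "coeff (pcompose_sq (monom 1 n + [:B:])) i = coeff (monom 1 (2 * n) + [:B:]) i"
  proof (cases "even i")
    case True
    then obtain k where "i = 2 * k"
      by blast
    then show ?thesis
      by (cases k) (auto simp: coeff_pcompose_sq coeff_pCons poly_monom power_0_left)
  next
    case False
    then obtain k where "i = 2 * k + 1"
      by (blast elim: oddE)
    then show ?thesis
      by (auto simp: coeff_pcompose_sq coeff_pCons; presburger)
  qed
qed

lemma irreducible_binomial_pcompose_sq: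
  fixes n C :: nat
  assumes irr: "irreducible (monom 1 n + [:of_nat C ^ 2:] :: rat poly)"
    and n: "n > 0" and C: "C > 0"
    and not_twice_square: "even n \<Longrightarrow> \<not> (\<exists>d>0. C = 2 * d\<^sup>2)"
  shows "irreducible (monom 1 (2 * n) + [:of_nat C ^ 2:] :: rat poly)"
proof (rule ccontr)
  define F :: "rat poly" where "F = monom 1 n + [:of_nat C ^ 2:]"
  have F: "degree F = n" "lead_coeff F = 1"
    unfolding F_def by (rule degree_binomial[OF n], rule lead_coeff_binomial[OF n])
  have F0: "poly F 0 \<noteq> 0"
    using n C by (simp add: F_def poly_monom power_0_left)
  assume "\<not> irreducible (monom 1 (2 * n) + [:of_nat C ^ 2:] :: rat poly)"
  then have "\<not> irreducible (pcompose_sq F)"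
    by (simp add: F_def pcompose_sq_binomial)
  then obtain g where g: "irreducible g" "lead_coeff g = 1" "g dvd pcompose_sq F"
    "degree g < 2 * degree F"
    using n F(1) by (auto elim: monic_irreducible_factor)
  then have "\<exists>E Q. F = smult ((- 1) ^ degree F) (E\<^sup>2 - [:0, 1:] * Q\<^sup>2)"
    by (rule eq_norm_if_irreducible_factor_pcompose_sq[OF irr[folded F_def] F(2) F0])
  then obtain E Q where EQ: "F = smult ((- 1) ^ n) (E\<^sup>2 - [:0, 1:] * Q\<^sup>2)"
    using F(1) by blast
  show False
  proof (cases "even n")
    case True
    then have "E\<^sup>2 - [:0, 1:] * Q\<^sup>2 = monom 1 (2 * (n div 2)) + [:of_nat C ^ 2:]"
      using EQ by (simp add: F_def)
    moreover have "n div 2 \<ge> 1"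
      using True n by (auto elim: evenE)
    ultimately show False
      using nat_eq_two_square_if_norm_form C not_twice_square[OF True] by blast
  next
    case False
    then have "poly F 0 = - (poly E 0)\<^sup>2"
      by (subst EQ) simp
    moreover have "poly F 0 = of_nat C ^ 2"
      using n by (simp add: F_def poly_monom power_0_left)
    ultimately have "(of_nat C)\<^sup>2 + (poly E 0)\<^sup>2 = (0 :: rat)"
      by simp
    then show False
      using C by (simp add: sum_power2_eq_zero_iff)
  qed
qed

lemma irreducible_binomial_pcompose_sq_iterate:
  fixes n C :: nat
  assumes irr: "irreducible (monom 1 n + [:of_nat C ^ 2:] :: rat poly)"
    and n: "n > 0" and C: "C > 0"
    and not_twice_square: "\<not> (\<exists>d>0. C = 2 * d\<^sup>2)"
  shows "irreducible (monom 1 (2 ^ k * n) + [:of_nat C ^ 2:] :: rat poly)"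
proof (induct k)
  case (Suc k)
  then show ?case
    using irreducible_binomial_pcompose_sq[of "2 ^ k * n" C] n C not_twice_square
    by (simp add: mult.assoc)
qed (simp add: irr)

lemma square_ne_twice_square:
  fixes c d :: nat
  assumes "d > 0"
  shows "c\<^sup>2 \<noteq> 2 * d\<^sup>2"
  using assms
proof (induct c arbitrary: d rule: less_induct)
  case (less c)
  show ?case
  proof
    assume eq: "c\<^sup>2 = 2 * d\<^sup>2"
    then have "even c"
      by (metis dvd_triv_left even_power pos2)
    then obtain c' where "c = 2 * c'"
      by blast
    with eq have d_sq: "d\<^sup>2 = 2 * c'\<^sup>2"
      by (simp add: power_mult_distrib)
    then have "c' > 0"
      using less(2) by (cases "c' = 0") auto
    moreover have "d\<^sup>2 < c\<^sup>2"
      using eq less(2) by simp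
    then have "d < c"
      by (rule power_less_imp_less_base) simp
    ultimately show False
      using less(1) d_sq by blast
  qed
qed

lemma irreducible_binomial_two_power_odd:
  fixes u r s m d b :: nat
  assumes u: "odd u" and r: "r > 0"
    and b: "b = m ^ d" "m > 0" "Gcd ((\<lambda>p. multiplicity p m) ` prime_factors m) = 1" "coprime d u"
    and not_exception: "\<not> (s \<ge> 1 \<and> r = 1 \<and> (\<exists>d'>0. b = 2 * d'\<^sup>2))"
  shows "irreducible (monom 1 (2 ^ (r + s) * u) + [:of_nat b ^ 2 ^ r:] :: rat poly)"
proof -
  define C where "C = b ^ 2 ^ (r - 1)"
  have "(2 :: nat) ^ r = 2 ^ (r - 1) * 2"
    using r by (simp flip: power_Suc2)
  then have C_sq: "of_nat b ^ 2 ^ r = (of_nat C ^ 2 :: rat)"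
    by (simp add: C_def power_mult)
  have u0: "u > 0" and C0: "C > 0"
    using u b by (auto simp: C_def intro: odd_pos)
  have "coprime (d * 2 ^ r) u"
    using b(4) u by simp
  then have "irreducible (monom 1 u + [:of_nat (m ^ (d * 2 ^ r)):] :: rat poly)"
    using u0 b by (intro irreducible_binomial_if_coprime) auto
  moreover have "of_nat (m ^ (d * 2 ^ r)) = (of_nat C ^ 2 :: rat)"
    using C_sq by (simp add: b(1) power_mult)
  ultimately have base: "irreducible (monom 1 u + [:of_nat C ^ 2:] :: rat poly)"
    by simp
  show ?thesis
  proof (cases "\<exists>d'>0. C = 2 * d'\<^sup>2")
    case False
    then show ?thesis
      using irreducible_binomial_pcompose_sq_iterate[OF base u0 C0 False] C_sq by simp
  next
    case True
    then obtain d' where d': "d' > 0" "C = 2 * d'\<^sup>2"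
      by blast
    have "r = 1"
    proof (rule ccontr)
      assume "r \<noteq> 1"
      then have "r - 1 = Suc (r - 2)"
        using r by simp
      then have "(2 :: nat) ^ (r - 1) = 2 ^ (r - 2) * 2"
        by (metis power_Suc2)
      then have "C = (b ^ 2 ^ (r - 2))\<^sup>2"
        by (simp add: C_def power_mult)
      then show False
        using d' square_ne_twice_square by metis
    qed
    moreover from this have "b = C"
      by (simp add: C_def)
    ultimately have "s = 0"
      using not_exception d' by (cases "s = 0") auto
    with \<open>r = 1\<close> \<open>b = C\<close> show ?thesis
      using irreducible_binomial_pcompose_sq[OF base u0 C0] u C_sq by simp
  qed
qed

lemma irreducible_binomial_rat:
  fixes t r m d b :: nat
  assumes t: "t > 0" and r: "r > 0"
    and b: "b = m ^ d" "m > 0" "Gcd ((\<lambda>p. multiplicity p m) ` prime_factors m) = 1" "coprime d t"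
    and not_exception: "\<not> (even t \<and> r = 1 \<and> (\<exists>d'>0. b = 2 * d'\<^sup>2))"
  shows "irreducible (monom 1 (2 ^ r * t) + [:of_nat b ^ 2 ^ r:] :: rat poly)"
proof -
  obtain u where u: "t = 2 ^ multiplicity 2 t * u" "odd u"
    by (rule multiplicity_decompose'[of t 2]) (use t in auto)
  define s where "s = multiplicity 2 t"
  have "coprime d u"
    using b(4) u(1) by (metis coprime_mult_right_iff)
  moreover have "s \<ge> 1 \<Longrightarrow> even t"
    using u(1) by (cases s) (auto simp: s_def)
  ultimately have "irreducible (monom 1 (2 ^ (r + s) * u) + [:of_nat b ^ 2 ^ r:] :: rat poly)"
    using irreducible_binomial_two_power_odd[OF u(2) r b(1-3)] not_exception by blast
  then show ?thesis
    using u(1) by (simp add: s_def power_add mult.assoc)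
qed

lemma of_int_poly_binomial:
  "map_poly of_int (monom 1 n + [:int b ^ k:]) = (monom 1 n + [:of_nat b ^ k:] :: 'a::ring_1 poly)"
  by (intro poly_eqI) (simp add: coeff_map_poly coeff_pCons split: nat.split)

lemma property_P_imp_power_of_primitive:
  assumes "property_P N b" "b > 0"
  obtains m d where "b = m ^ d" "m > 0" "Gcd ((\<lambda>p. multiplicity p m) ` prime_factors m) = 1"
    "coprime d N"
proof (cases "prime b")
  case True
  then have "Gcd ((\<lambda>p. multiplicity p b) ` prime_factors b) = 1"
    by (simp add: prime_prime_factors multiplicity_self)
  then show ?thesis
    using that[of b 1] assms(2) by simp
next
  case False
  then show ?thesis
    using assms(1) that unfolding property_P_def by blast
qed

lemma not_irreducible_of_int_poly_if_reducible_Z: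
  assumes "reducible_Z f"
  shows "\<not> irreducible (map_poly of_int f :: rat poly)"
proof
  obtain g h where gh: "f = g * h" "degree g \<ge> 1" "degree h \<ge> 1"
    using assms unfolding reducible_Z_def by blast
  have "map_poly of_int f = (map_poly of_int g * map_poly of_int h :: rat poly)"
    unfolding gh(1) by (intro poly_eqI) (simp add: coeff_map_poly coeff_mult of_int_sum)
  moreover have "g \<noteq> 0" "h \<noteq> 0"
    using gh by auto
  moreover assume "irreducible (map_poly of_int f :: rat poly)"
  ultimately have "is_unit (map_poly of_int g :: rat poly) \<or>
                   is_unit (map_poly of_int h :: rat poly)"
    by (blast dest: irreducibleD)
  then show False
    using gh(2,3) \<open>g \<noteq> 0\<close> \<open>h \<noteq> 0\<close> is_unit_iff_degree[of "map_poly of_int g :: rat poly"]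
      is_unit_iff_degree[of "map_poly of_int h :: rat poly"]
    by (auto simp: degree_map_poly map_poly_eq_0_iff)
qed

lemma reducible_Z_quartic:
  fixes s d :: nat
  assumes "s > 0"
  shows "reducible_Z (monom 1 (4 * s) + [:4 * int d ^ 4:])"
proof -
  define g h :: "int poly" where
    "g = monom 1 (2 * s) + [:2 * int d ^ 2:] + monom (2 * int d) s" and
    "h = monom 1 (2 * s) + [:2 * int d ^ 2:] + monom (- 2 * int d) s"
  have "degree (monom c s) < degree (monom 1 (2 * s) + [:2 * int d ^ 2:])" for c :: int
    using assms degree_monom_le[of c s] by (simp add: degree_binomial)
  then have "degree g = 2 * s" "degree h = 2 * s"
    using assms by (simp_all add: g_def h_def degree_add_eq_left degree_binomial)
  moreover have "monom 1 (4 * s) + [:4 * int d ^ 4:] = g * h"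
  proof (rule poly_eq_poly_eq_iff[THEN iffD1], rule ext)
    fix x :: int
    define X where "X = x ^ s"
    have "poly g x = X\<^sup>2 + 2 * int d ^ 2 + 2 * int d * X"
      "poly h x = X\<^sup>2 + 2 * int d ^ 2 - 2 * int d * X"
      by (simp_all add: g_def h_def poly_monom X_def power_mult mult.commute)
    then have "poly (g * h) x =
               (X\<^sup>2 + 2 * int d ^ 2 + 2 * int d * X) * (X\<^sup>2 + 2 * int d ^ 2 - 2 * int d * X)"
      by simp
    also have "\<dots> = X ^ 4 + 4 * int d ^ 4"
      by algebra
    finally show "poly (monom 1 (4 * s) + [:4 * int d ^ 4:]) x = poly (g * h) x"
      by (simp add: poly_monom X_def mult.commute flip: power_mult)
  qed
  ultimately show ?thesis
    using assms unfolding reducible_Z_def by (intro exI[of _ g] exI[of _ h]) auto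
qed

theorem lemma6:
  fixes t r b :: nat
  assumes "t > 0" and "r > 0" and "b > 0"
    and "property_P (2 ^ r * t) b"
  shows "reducible_Z (monom 1 (2 ^ r * t) + [: int b ^ (2 ^ r) :]) \<longleftrightarrow>
           (even t \<and> r = 1 \<and> (\<exists>d::nat. d > 0 \<and> b = 2 * d ^ 2))"
proof
  assume red: "reducible_Z (monom 1 (2 ^ r * t) + [: int b ^ (2 ^ r) :])"
  obtain m d where b: "b = m ^ d" "m > 0" "Gcd ((\<lambda>p. multiplicity p m) ` prime_factors m) = 1"
    "coprime d (2 ^ r * t)"
    using property_P_imp_power_of_primitive[OF assms(4,3)] .
  then have "coprime d t"
    by simp
  show "even t \<and> r = 1 \<and> (\<exists>d::nat. d > 0 \<and> b = 2 * d ^ 2)"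
  proof (rule ccontr)
    assume "\<not> (even t \<and> r = 1 \<and> (\<exists>d::nat. d > 0 \<and> b = 2 * d ^ 2))"
    then have "irreducible (monom 1 (2 ^ r * t) + [:of_nat b ^ 2 ^ r:] :: rat poly)"
      using irreducible_binomial_rat[OF assms(1,2) b(1-3) \<open>coprime d t\<close>] by auto
    then show False
      using not_irreducible_of_int_poly_if_reducible_Z[OF red] by (simp add: of_int_poly_binomial)
  qed
next
  assume "even t \<and> r = 1 \<and> (\<exists>d::nat. d > 0 \<and> b = 2 * d ^ 2)"
  then obtain s d where "t = 2 * s" "s > 0" "r = 1" "b = 2 * d\<^sup>2"
    using assms(1) by auto
  then show "reducible_Z (monom 1 (2 ^ r * t) + [: int b ^ (2 ^ r) :])"
    using reducible_Z_quartic[of s d] by (simp add: power_mult_distrib flip: power_mult)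
qed

end
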